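(* Let $(\mathcal V,\mathcal W,\lambda)$ be a FTvN system, let $E$ be a spectral set in $\mathcal V$, $d\in\mathcal V$ and $\alpha\in\mathbb R$. Then the following are equivalent: (i) $\alpha\ge\langle d,z\rangle$ for all $z\in E$; (ii) $\alpha\ge\langle d,z\rangle$ for all $z\in\overline{\operatorname{conv}(E)}$; (iii) $\alpha\ge\langle\lambda(d),\lambda(z)\rangle$ for all $z\in E$; (iv) $\alpha\ge\langle\lambda(d),\lambda(z)\rangle$ for all $z\in\overline{\operatorname{conv}(E)}$.
   Context: A Fan-Theobald-von Neumann (FTvN) system is a triple $(\mathcal V,\mathcal W,\lambda)$ where $\mathcal V,\mathcal W$ are real inner product spaces and $\lambda:\mathcal V\to\mathcal W$ is a map such that: (A1) $\|\lambda(x)\|=\|x\|$ for all $x\in\mathcal V$; (A2) $\langle x,y\rangle\le\langle\lambda(x),\lambda(y)\rangle$ for all $x,y\in\mathcal V$; (A3) for every $c\in\mathcal V$ and $q\in\lambda(\mathcal V)$ there exists $x\in\mathcal V$ with $\lambda(x)=q$ and $\langle c,x\rangle=\langle\lambda(c),\lambda(x)\rangle$. The $\lambda$-orbit of $u$ is $[u]=\{x\in\mathcal V:\lambda(x)=\lambda(u)\}$. A set $E\subseteq\mathcal V$ is spectral if $E=\lambda^{-1}(Q)$ for some $Q\subseteq\mathcal W$, equivalently $x\in E\Rightarrow[x]\subseteq E$. $\overline{S}$ denotes closure and $\operatorname{conv}$ convex hull. *)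

theory Defs
  imports "HOL-Analysis.Analysis"
begin

definition FTvN :: "('v::real_inner \<Rightarrow> 'w::real_inner) \<Rightarrow> bool" where
  "FTvN lam \<longleftrightarrow>
     (\<forall>x. norm (lam x) = norm x) \<and>
     (\<forall>x y. inner x y \<le> inner (lam x) (lam y)) \<and>
     (\<forall>c q. q \<in> range lam \<longrightarrow> (\<exists>x. lam x = q \<and> inner c x = inner (lam c) (lam x)))"

definition spectral_set :: "('v \<Rightarrow> 'w) \<Rightarrow> 'v set \<Rightarrow> bool" where
  "spectral_set lam E \<longleftrightarrow> (\<exists>Q. E = lam -` Q)"

end

theory Submission
  imports Defs
begin

text \<open>A closed half-space \<open>{z. \<langle>d, z\<rangle> \<le> \<alpha>}\<close> is closed and convex, so it contains \<open>E\<close> iff it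
  contains \<open>closure (convex hull E)\<close>. Axiom (A2) gives \<open>\<langle>d, z\<rangle> \<le> \<langle>\<lambda> d, \<lambda> z\<rangle>\<close>; conversely (A3)
  replaces \<open>z\<close> by a point of its \<open>\<lambda>\<close>-orbit at which this is an equality, and that point
  stays in \<open>E\<close> because \<open>E\<close> is spectral. For \<open>z\<close> in the closed convex hull, (A3) instead moves
  \<open>d\<close> along its orbit to a \<open>y\<close> with \<open>\<langle>y, z\<rangle> = \<langle>\<lambda> d, \<lambda> z\<rangle>\<close>; by (A2) the half-space of \<open>y\<close>
  still contains \<open>E\<close>, hence also \<open>z\<close>.\<close>

lemma FTvN_inner_le:
  assumes "FTvN lam"
  shows "inner x y \<le> inner (lam x) (lam y)"
  using assms unfolding FTvN_def by blast

lemma FTvN_orbit_attains: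
  assumes "FTvN lam"
  obtains x where "lam x = lam u" "inner c x = inner (lam c) (lam x)"
  using assms unfolding FTvN_def by blast

lemma spectral_set_orbit:
  assumes "spectral_set lam E" "z \<in> E" "lam x = lam z"
  shows "x \<in> E"
  using assms unfolding spectral_set_def by auto

lemma subset_closure_convex_hull: "E \<subseteq> closure (convex hull E)"
  using hull_subset[of E convex] closure_subset[of "convex hull E"] by (rule subset_trans)

lemma halfspace_le_closure_convex_hull_iff:
  fixes E :: "'a::real_inner set"
  shows "(\<forall>z\<in>closure (convex hull E). inner d z \<le> \<alpha>) \<longleftrightarrow> (\<forall>z\<in>E. inner d z \<le> \<alpha>)"
proof
  assume "\<forall>z\<in>closure (convex hull E). inner d z \<le> \<alpha>"
  then show "\<forall>z\<in>E. inner d z \<le> \<alpha>"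
    using subset_closure_convex_hull by blast
next
  assume "\<forall>z\<in>E. inner d z \<le> \<alpha>"
  then have "convex hull E \<subseteq> {z. inner d z \<le> \<alpha>}"
    by (intro hull_minimal) (auto simp: convex_halfspace_le)
  then have "closure (convex hull E) \<subseteq> {z. inner d z \<le> \<alpha>}"
    by (intro closure_minimal) (auto simp: closed_halfspace_le)
  then show "\<forall>z\<in>closure (convex hull E). inner d z \<le> \<alpha>"
    by blast
qed

lemma FTvN_spectral_bound_iff:
  assumes "FTvN lam" "spectral_set lam E"
  shows "(\<forall>z\<in>E. inner d z \<le> \<alpha>) \<longleftrightarrow> (\<forall>z\<in>E. inner (lam d) (lam z) \<le> \<alpha>)"
proof
  assume bound: "\<forall>z\<in>E. inner d z \<le> \<alpha>"
  show "\<forall>z\<in>E. inner (lam d) (lam z) \<le> \<alpha>"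
  proof
    fix z assume "z \<in> E"
    obtain x where x: "lam x = lam z" "inner d x = inner (lam d) (lam x)"
      using FTvN_orbit_attains[OF assms(1)] .
    have "x \<in> E"
      using spectral_set_orbit[OF assms(2) \<open>z \<in> E\<close> x(1)] .
    then show "inner (lam d) (lam z) \<le> \<alpha>"
      using bound x by auto
  qed
next
  assume bound: "\<forall>z\<in>E. inner (lam d) (lam z) \<le> \<alpha>"
  show "\<forall>z\<in>E. inner d z \<le> \<alpha>"
  proof
    fix z assume "z \<in> E"
    have "inner d z \<le> inner (lam d) (lam z)"
      using assms(1) by (rule FTvN_inner_le)
    also have "\<dots> \<le> \<alpha>"
      using bound \<open>z \<in> E\<close> by blast
    finally show "inner d z \<le> \<alpha>" .
  qed
qed

lemma FTvN_lam_bound_closure_convex_hull_iff: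
  assumes "FTvN lam"
  shows "(\<forall>z\<in>closure (convex hull E). inner (lam d) (lam z) \<le> \<alpha>)
     \<longleftrightarrow> (\<forall>z\<in>E. inner (lam d) (lam z) \<le> \<alpha>)"
proof
  assume "\<forall>z\<in>closure (convex hull E). inner (lam d) (lam z) \<le> \<alpha>"
  then show "\<forall>z\<in>E. inner (lam d) (lam z) \<le> \<alpha>"
    using subset_closure_convex_hull by blast
next
  assume bound: "\<forall>z\<in>E. inner (lam d) (lam z) \<le> \<alpha>"
  show "\<forall>z\<in>closure (convex hull E). inner (lam d) (lam z) \<le> \<alpha>"
  proof
    fix z assume z: "z \<in> closure (convex hull E)"
    obtain y where y: "lam y = lam d" "inner z y = inner (lam z) (lam y)"
      using FTvN_orbit_attains[OF assms] .
    have "inner y e \<le> \<alpha>" if "e \<in> E" for e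
    proof -
      have "inner y e \<le> inner (lam y) (lam e)"
        using assms by (rule FTvN_inner_le)
      also have "\<dots> \<le> \<alpha>"
        using bound that y(1) by simp
      finally show ?thesis .
    qed
    then have "inner y z \<le> \<alpha>"
      using halfspace_le_closure_convex_hull_iff[of E y \<alpha>] z by blast
    then show "inner (lam d) (lam z) \<le> \<alpha>"
      using y by (simp add: inner_commute)
  qed
qed

theorem theorem5p3:
  fixes lam :: "'v::real_inner \<Rightarrow> 'w::real_inner"
    and E :: "'v set" and d :: 'v and \<alpha> :: real
  assumes "FTvN lam"
    and "spectral_set lam E"
  shows "((\<forall>z\<in>E. inner d z \<le> \<alpha>) \<longleftrightarrow> (\<forall>z\<in>closure (convex hull E). inner d z \<le> \<alpha>))
       \<and> ((\<forall>z\<in>E. inner d z \<le> \<alpha>) \<longleftrightarrow> (\<forall>z\<in>E. inner (lam d) (lam z) \<le> \<alpha>))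
       \<and> ((\<forall>z\<in>E. inner d z \<le> \<alpha>) \<longleftrightarrow> (\<forall>z\<in>closure (convex hull E). inner (lam d) (lam z) \<le> \<alpha>))"
  using halfspace_le_closure_convex_hull_iff[of E d \<alpha>]
    FTvN_spectral_bound_iff[OF assms, of d \<alpha>]
    FTvN_lam_bound_closure_convex_hull_iff[OF assms(1), of E d \<alpha>]
  by simp

end
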